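(* Let $J$ be a non-degenerate interval, $f_{1,\infty}$ an $m$-periodic sequence of continuous surjective self-maps of $J$, and $g=f_m\circ\cdots\circ f_1$. If the autonomous system $(J,g)$ is topologically transitive, then $(J,f_{1,\infty})$ is Devaney chaotic.
   Context: $m$-periodic: $f_{n+m}=f_n$ for all $n$. Write $f_1^n=f_n\circ\cdots\circ f_1$. For the non-autonomous system: topologically transitive means for all non-empty open $U,V$ some $n$ with $f_1^n(U)\cap V\ne\emptyset$; a point $x$ is periodic if there is $n$ with $f_1^{nk}(x)=x$ for all $k\in\mathbb{N}$; sensitive means there is $\delta>0$ such that for every $x$ and neighbourhood $U$ of $x$ there exist $y\in U$, $n$ with $|f_1^n(x)-f_1^n(y)|>\delta$; Devaney chaotic means topologically transitive, dense periodic points, and sensitive. *)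

theory Defs
  imports "HOL-Analysis.Analysis"
begin

fun nacomp :: "(nat \<Rightarrow> real \<Rightarrow> real) \<Rightarrow> nat \<Rightarrow> real \<Rightarrow> real" where
  "nacomp f 0 = id"
| "nacomp f (Suc n) = f (Suc n) \<circ> nacomp f n"

definition nondegenerate_interval :: "real set \<Rightarrow> bool" where
  "nondegenerate_interval J \<longleftrightarrow> is_interval J \<and> (\<exists>a\<in>J. \<exists>b\<in>J. a < b)"

definition top_transitive :: "real set \<Rightarrow> (real \<Rightarrow> real) \<Rightarrow> bool" where
  "top_transitive J g \<longleftrightarrow>
     (\<forall>U V. openin (top_of_set J) U \<and> U \<noteq> {} \<and> openin (top_of_set J) V \<and> V \<noteq> {} \<longrightarrow>
        (\<exists>n\<ge>1. (g ^^ n) ` U \<inter> V \<noteq> {}))"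

definition na_transitive :: "real set \<Rightarrow> (nat \<Rightarrow> real \<Rightarrow> real) \<Rightarrow> bool" where
  "na_transitive J f \<longleftrightarrow>
     (\<forall>U V. openin (top_of_set J) U \<and> U \<noteq> {} \<and> openin (top_of_set J) V \<and> V \<noteq> {} \<longrightarrow>
        (\<exists>n\<ge>1. nacomp f n ` U \<inter> V \<noteq> {}))"

definition na_periodic_point :: "(nat \<Rightarrow> real \<Rightarrow> real) \<Rightarrow> real \<Rightarrow> bool" where
  "na_periodic_point f x \<longleftrightarrow> (\<exists>n\<ge>1. \<forall>k\<ge>1. nacomp f (n * k) x = x)"

definition na_dense_periodic :: "real set \<Rightarrow> (nat \<Rightarrow> real \<Rightarrow> real) \<Rightarrow> bool" where
  "na_dense_periodic J f \<longleftrightarrow> J \<subseteq> closure {x \<in> J. na_periodic_point f x}"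

definition na_sensitive :: "real set \<Rightarrow> (nat \<Rightarrow> real \<Rightarrow> real) \<Rightarrow> bool" where
  "na_sensitive J f \<longleftrightarrow>
     (\<exists>\<delta>>0. \<forall>x\<in>J. \<forall>U. openin (top_of_set J) U \<and> x \<in> U \<longrightarrow>
        (\<exists>y\<in>U. \<exists>n\<ge>1. \<bar>nacomp f n x - nacomp f n y\<bar> > \<delta>))"

definition na_devaney_chaotic :: "real set \<Rightarrow> (nat \<Rightarrow> real \<Rightarrow> real) \<Rightarrow> bool" where
  "na_devaney_chaotic J f \<longleftrightarrow> na_transitive J f \<and> na_dense_periodic J f \<and> na_sensitive J f"

end

theory Submission
  imports Defs
begin

text \<open>
  By periodicity the composition of the first \<open>mk\<close> maps is \<open>g\<^sup>k\<close>, so transitivity, dense periodic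
  points and sensitivity of \<open>(J, g)\<close> pass to the non-autonomous system along the times \<open>mk\<close>;
  it suffices that a transitive interval map \<open>g\<close> is Devaney chaotic. Periodic points are dense:
  on a segment without periodic points every \<open>g\<^sup>j - id\<close> has constant sign, yet transitivity
  moves some point of its left third into the right third and some point of the right third
  into the left third. Sensitivity follows as in Banks et al.: two disjoint finite periodic
  orbits give a uniform distance from every point \<open>x\<close> to some periodic orbit, and a periodic
  point near \<open>x\<close> together with a nearby point that later shadows that orbit cannot both stay
  close to the orbit of \<open>x\<close>.
\<close>

lemma funpow_image_subset:
  assumes "g ` J \<subseteq> J"
  shows "(g ^^ n) ` J \<subseteq> J"
  by (induction n) (use assms in auto)

lemma continuous_on_funpow:
  assumes "continuous_on J g" "g ` J \<subseteq> J"
  shows "continuous_on J (g ^^ n)"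
proof (induction n)
  case (Suc n)
  have "continuous_on ((g ^^ n) ` J) g"
    using continuous_on_subset[OF assms(1) funpow_image_subset[OF assms(2)]] .
  then show ?case
    using continuous_on_compose[OF Suc] by simp
qed simp

lemma funpow_mult_fixpoint:
  assumes "(g ^^ p) x = x"
  shows "(g ^^ (p * k)) x = x"
  using funpow_mod_eq[OF assms, of "p * k"] by simp

lemma finite_periodic_orbit:
  assumes "(g ^^ p) x = x" "p \<ge> 1"
  shows "finite (range (\<lambda>i. (g ^^ i) x))"
proof (rule finite_subset)
  show "range (\<lambda>i. (g ^^ i) x) \<subseteq> (\<lambda>i. (g ^^ i) x) ` {..<p}"
  proof clarify
    fix i
    have "(g ^^ i) x = (g ^^ (i mod p)) x"
      using funpow_mod_eq[OF assms(1)] by simp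
    moreover have "i mod p < p"
      using assms(2) by simp
    ultimately show "(g ^^ i) x \<in> (\<lambda>i. (g ^^ i) x) ` {..<p}"
      by blast
  qed
qed simp

lemma periodic_orbits_disjoint:
  assumes "(g ^^ p) y = y" "p \<ge> 1" "y \<notin> range (\<lambda>i. (g ^^ i) x)"
  shows "range (\<lambda>i. (g ^^ i) x) \<inter> range (\<lambda>i. (g ^^ i) y) = {}"
proof (rule ccontr)
  assume "range (\<lambda>i. (g ^^ i) x) \<inter> range (\<lambda>i. (g ^^ i) y) \<noteq> {}"
  then obtain z where "z \<in> range (\<lambda>i. (g ^^ i) x)" "z \<in> range (\<lambda>i. (g ^^ i) y)"
    by blast
  then obtain i j where "z = (g ^^ j) x" "z = (g ^^ i) y"
    by blast
  then have ij: "(g ^^ i) y = (g ^^ j) x"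
    by simp
  have "p * i - i + i = p * i"
    using assms(2) by simp
  then have "y = (g ^^ (p * i - i)) ((g ^^ i) y)"
    using funpow_mult_fixpoint[OF assms(1), of i] funpow_add[of "p * i - i" i g] by simp
  also have "\<dots> = (g ^^ (p * i - i + j)) x"
    by (simp add: ij funpow_add)
  finally show False
    using assms(3) by blast
qed

lemma fixpoint_free_same_side:
  fixes h :: "real \<Rightarrow> real"
  assumes "connected I" "continuous_on I h" "\<forall>t\<in>I. h t \<noteq> t" "a \<in> I" "b \<in> I"
  shows "h a < a \<longleftrightarrow> h b < b"
proof -
  have conn: "connected ((\<lambda>t. h t - t) ` I)"
    by (intro connected_continuous_image continuous_intros assms(1,2))
  have no_zero: "0 \<notin> (\<lambda>t. h t - t) ` I"
    using assms(3) by auto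
  have no_sign_change: "\<not> (h u < u \<and> v < h v)" if "u \<in> I" "v \<in> I" for u v
    using connected_ivt_component[OF conn, of "h u - u" "h v - v" 1 0] that no_zero by fastforce
  show ?thesis
    using no_sign_change[of a b] no_sign_change[of b a] assms(3-5) by force
qed

lemma fixpoint_free_iterate_same_side:
  fixes g :: "real \<Rightarrow> real"
  assumes g: "continuous_on J g" "g ` J \<subseteq> J" and I: "I \<subseteq> J" "connected I"
    and no_periodic: "\<forall>j\<ge>1. \<forall>t\<in>I. (g ^^ j) t \<noteq> t"
    and "p \<ge> 1" "a \<in> I" "(g ^^ p) a \<in> I" "i \<ge> 1" "u \<in> I"
  shows "(g ^^ (i * p)) u < u \<longleftrightarrow> (g ^^ p) a < a"
proof -
  have side: "(g ^^ j) u < u \<longleftrightarrow> (g ^^ j) v < v" if "j \<ge> 1" "u \<in> I" "v \<in> I" for j u v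
    using fixpoint_free_same_side[OF I(2) continuous_on_subset[OF continuous_on_funpow[OF g] I(1)]]
      no_periodic that by blast
  have "(g ^^ (i * p)) a < a \<longleftrightarrow> (g ^^ p) a < a"
    using \<open>i \<ge> 1\<close>
  proof (induction i rule: nat_induct_at_least)
    case base
    then show ?case by simp
  next
    case (Suc i)
    define b where "b = (g ^^ p) a"
    have "Suc i * p = i * p + p"
      by simp
    then have "(g ^^ (Suc i * p)) a = (g ^^ (i * p)) b"
      unfolding b_def by (simp only: funpow_add o_apply)
    moreover have "(g ^^ (i * p)) b < b \<longleftrightarrow> b < a"
      using side[of "i * p" b a] Suc \<open>p \<ge> 1\<close> \<open>a \<in> I\<close> \<open>(g ^^ p) a \<in> I\<close> unfolding b_def by simp
    moreover have "(g ^^ (i * p)) b \<noteq> b" "b \<noteq> a"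
      using no_periodic Suc.hyps \<open>p \<ge> 1\<close> \<open>a \<in> I\<close> \<open>(g ^^ p) a \<in> I\<close> unfolding b_def by auto
    ultimately show ?case
      unfolding b_def by linarith
  qed
  then show ?thesis
    using side[of "i * p" u a] assms(6-10) by simp
qed

lemma nondegenerate_interval_infinite:
  assumes "nondegenerate_interval J"
  shows "infinite J"
proof -
  obtain a b where "is_interval J" "a \<in> J" "b \<in> J" "a < b"
    using assms unfolding nondegenerate_interval_def by blast
  then have "{a..b} \<subseteq> J"
    using mem_is_interval_1_I[of J a b] by auto
  moreover have "infinite {a..b}"
    using \<open>a < b\<close> by simp
  ultimately show ?thesis
    by (rule infinite_super)
qed

lemma nondegenerate_interval_segment_in_ball:
  fixes J :: "real set"
  assumes "nondegenerate_interval J" "x \<in> J" "e > 0"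
  obtains lo hi where "lo < hi" "{lo..hi} \<subseteq> J \<inter> ball x e"
proof -
  obtain a b where J: "is_interval J" "a \<in> J" "b \<in> J" "a < b"
    using assms(1) unfolding nondegenerate_interval_def by blast
  show ?thesis
  proof (cases "x < b")
    case True
    define hi where "hi = min b (x + e / 2)"
    have "x < hi"
      using True assms(3) by (simp add: hi_def)
    moreover have "{x..hi} \<subseteq> J \<inter> ball x e"
      using mem_is_interval_1_I[OF J(1) \<open>x \<in> J\<close> J(3)] assms(3) by (auto simp: hi_def dist_real_def)
    ultimately show ?thesis
      using that by blast
  next
    case False
    define lo where "lo = max a (x - e / 2)"
    have "lo < x"
      using False J(4) assms(3) by (simp add: lo_def)
    moreover have "{lo..x} \<subseteq> J \<inter> ball x e"
      using mem_is_interval_1_I[OF J(1) J(2) \<open>x \<in> J\<close>] assms(3) by (auto simp: lo_def dist_real_def)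
    ultimately show ?thesis
      using that by blast
  qed
qed

definition periodic_points_dense :: "'a::topological_space set \<Rightarrow> ('a \<Rightarrow> 'a) \<Rightarrow> bool" where
  "periodic_points_dense J g \<longleftrightarrow> J \<subseteq> closure {x \<in> J. \<exists>p\<ge>1. (g ^^ p) x = x}"

lemma periodic_points_denseI:
  fixes g :: "'a::metric_space \<Rightarrow> 'a"
  assumes "\<And>x e. x \<in> J \<Longrightarrow> e > 0 \<Longrightarrow> \<exists>y\<in>J \<inter> ball x e. \<exists>p\<ge>1. (g ^^ p) y = y"
  shows "periodic_points_dense J g"
  unfolding periodic_points_dense_def
proof
  fix x assume "x \<in> J"
  show "x \<in> closure {x \<in> J. \<exists>p\<ge>1. (g ^^ p) x = x}"
    unfolding closure_approachable
  proof (intro allI impI)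
    fix e :: real assume "e > 0"
    then obtain y where "y \<in> J \<inter> ball x e" "\<exists>p\<ge>1. (g ^^ p) y = y"
      using assms \<open>x \<in> J\<close> by blast
    then show "\<exists>y\<in>{x \<in> J. \<exists>p\<ge>1. (g ^^ p) x = x}. dist y x < e"
      by (auto simp: dist_commute)
  qed
qed

lemma periodic_points_denseD:
  assumes "periodic_points_dense J g" "openin (top_of_set J) U" "x \<in> U"
  shows "\<exists>y\<in>U. \<exists>p\<ge>1. (g ^^ p) y = y"
proof -
  obtain S where "open S" "U = J \<inter> S"
    using assms(2) by (auto simp: openin_open)
  with assms have "S \<inter> closure {x \<in> J. \<exists>p\<ge>1. (g ^^ p) x = x} \<noteq> {}"
    unfolding periodic_points_dense_def by auto
  then have "S \<inter> {x \<in> J. \<exists>p\<ge>1. (g ^^ p) x = x} \<noteq> {}"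
    using open_Int_closure_eq_empty[OF \<open>open S\<close>] by blast
  then show ?thesis
    using \<open>U = J \<inter> S\<close> by blast
qed

lemma transitive_interval_map_periodic_dense:
  fixes g :: "real \<Rightarrow> real"
  assumes J: "nondegenerate_interval J" and g: "continuous_on J g" "g ` J \<subseteq> J"
    and transitive: "top_transitive J g"
  shows "periodic_points_dense J g"
proof (rule periodic_points_denseI, rule ccontr)
  fix x and e :: real
  assume "x \<in> J" "e > 0" and no_periodic_near: "\<not> (\<exists>y\<in>J \<inter> ball x e. \<exists>p\<ge>1. (g ^^ p) y = y)"
  obtain lo hi where "lo < hi" and segment: "{lo..hi} \<subseteq> J \<inter> ball x e"
    using nondegenerate_interval_segment_in_ball[OF J \<open>x \<in> J\<close> \<open>e > 0\<close>] by blast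
  then have no_periodic: "\<forall>j\<ge>1. \<forall>t\<in>{lo..hi}. (g ^^ j) t \<noteq> t"
    using no_periodic_near by blast
  define L where "L = J \<inter> {lo<..<lo + (hi - lo) / 3}"
  define R where "R = J \<inter> {hi - (hi - lo) / 3<..<hi}"
  have LR: "L \<subseteq> {lo..hi}" "R \<subseteq> {lo..hi}" "\<And>u v. u \<in> L \<Longrightarrow> v \<in> R \<Longrightarrow> u < v"
    unfolding L_def R_def using \<open>lo < hi\<close> by (auto simp: field_simps)
  have "lo + (hi - lo) / 6 \<in> {lo..hi}" "hi - (hi - lo) / 6 \<in> {lo..hi}"
    using \<open>lo < hi\<close> by (auto simp: field_simps)
  then have "lo + (hi - lo) / 6 \<in> L" "hi - (hi - lo) / 6 \<in> R"
    using \<open>lo < hi\<close> segment unfolding L_def R_def by (auto simp: field_simps)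
  moreover have "openin (top_of_set J) L" "openin (top_of_set J) R"
    unfolding L_def R_def by (auto intro: openin_open_Int)
  ultimately have "\<exists>n\<ge>1. (g ^^ n) ` L \<inter> R \<noteq> {}" "\<exists>k\<ge>1. (g ^^ k) ` R \<inter> L \<noteq> {}"
    using transitive unfolding top_transitive_def by blast+
  then obtain n u k v where n: "n \<ge> 1" "u \<in> L" "(g ^^ n) u \<in> R"
    and k: "k \<ge> 1" "v \<in> R" "(g ^^ k) v \<in> L"
    by blast
  have "{lo..hi} \<subseteq> J" "connected {lo..hi}"
    using segment by auto
  note same_side = fixpoint_free_iterate_same_side[OF g this no_periodic]
  have "u \<in> {lo..hi}" "(g ^^ n) u \<in> {lo..hi}" "v \<in> {lo..hi}" "(g ^^ k) v \<in> {lo..hi}"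
    using LR n k by auto
  then have "(g ^^ (k * n)) v < v \<longleftrightarrow> (g ^^ n) u < u"
    and "(g ^^ (n * k)) v < v \<longleftrightarrow> (g ^^ k) v < v"
    using same_side n(1) k(1) by blast+
  then show False
    using LR(3)[of u "(g ^^ n) u"] LR(3)[of "(g ^^ k) v" v] n k by (simp add: mult.commute)
qed

lemma uniformly_far_periodic_orbit:
  fixes g :: "'a::heine_borel \<Rightarrow> 'a"
  assumes "infinite J"
    and "periodic_points_dense J g"
  shows "\<exists>d>0. \<forall>x. \<exists>q\<in>J. (\<exists>p\<ge>1. (g ^^ p) q = q) \<and> (\<forall>i. d \<le> dist x ((g ^^ i) q))"
proof -
  obtain x0 where "x0 \<in> J"
    using infinite_imp_nonempty[OF assms(1)] by blast
  then obtain q1 p1 where q1: "q1 \<in> J" "p1 \<ge> 1" "(g ^^ p1) q1 = q1"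
    using periodic_points_denseD[OF \<open>periodic_points_dense J g\<close>, of J x0] by auto
  define O1 where "O1 = range (\<lambda>i. (g ^^ i) q1)"
  have "finite O1"
    unfolding O1_def using finite_periodic_orbit[OF q1(3,2)] .
  then have "openin (top_of_set J) (J - O1)"
    by (simp add: Diff_eq openin_open_Int finite_imp_closed open_Compl)
  moreover obtain z where "z \<in> J - O1"
    using infinite_imp_nonempty[OF Diff_infinite_finite[OF \<open>finite O1\<close> assms(1)]] by blast
  ultimately obtain q2 p2 where q2: "q2 \<in> J" "q2 \<notin> O1" "p2 \<ge> 1" "(g ^^ p2) q2 = q2"
    using periodic_points_denseD[OF \<open>periodic_points_dense J g\<close>, of "J - O1" z] by auto
  define O2 where "O2 = range (\<lambda>i. (g ^^ i) q2)"
  have "O1 \<inter> O2 = {}"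
    unfolding O2_def using periodic_orbits_disjoint[OF q2(4,3)] q2(2) unfolding O1_def by blast
  then obtain d where d: "d > 0" "\<forall>u\<in>O1. \<forall>v\<in>O2. d \<le> dist u v"
    using separate_closed_compact[OF finite_imp_closed[OF \<open>finite O1\<close>]
        finite_imp_compact[OF finite_periodic_orbit[OF q2(4,3)]]]
    unfolding O2_def by blast
  have "\<exists>q\<in>J. (\<exists>p\<ge>1. (g ^^ p) q = q) \<and> (\<forall>i. d / 2 \<le> dist x ((g ^^ i) q))" for x
  proof (cases "\<forall>i. d / 2 \<le> dist x ((g ^^ i) q1)")
    case True
    then show ?thesis using q1 by blast
  next
    case False
    then obtain i where i: "dist x ((g ^^ i) q1) < d / 2"
      by (meson not_le)
    have "d / 2 \<le> dist x ((g ^^ j) q2)" for j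
    proof -
      have "d \<le> dist ((g ^^ i) q1) ((g ^^ j) q2)"
        using d unfolding O1_def O2_def by blast
      then show ?thesis
        using i dist_triangle3[of "(g ^^ i) q1" "(g ^^ j) q2" x] by linarith
    qed
    then show ?thesis using q2 by blast
  qed
  then show ?thesis
    using d(1) half_gt_zero by blast
qed

definition sensitive :: "real set \<Rightarrow> (real \<Rightarrow> real) \<Rightarrow> bool" where
  "sensitive J g \<longleftrightarrow>
     (\<exists>\<delta>>0. \<forall>x\<in>J. \<forall>U. openin (top_of_set J) U \<and> x \<in> U \<longrightarrow>
        (\<exists>y\<in>U. \<exists>n\<ge>1. \<delta> < \<bar>(g ^^ n) x - (g ^^ n) y\<bar>))"

lemma transitive_periodic_dense_imp_sensitive:
  fixes g :: "real \<Rightarrow> real"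
  assumes g: "continuous_on J g" "g ` J \<subseteq> J" and transitive: "top_transitive J g"
    and "infinite J"
    and "periodic_points_dense J g"
  shows "sensitive J g"
proof -
  obtain d where "d > 0"
    and far: "\<And>x. \<exists>q\<in>J. (\<exists>p\<ge>1. (g ^^ p) q = q) \<and> (\<forall>i. d \<le> dist x ((g ^^ i) q))"
    using uniformly_far_periodic_orbit[OF \<open>infinite J\<close> \<open>periodic_points_dense J g\<close>] by blast
  define \<delta> where "\<delta> = d / 4"
  have "\<exists>y\<in>U. \<exists>N\<ge>1. \<delta> < \<bar>(g ^^ N) x - (g ^^ N) y\<bar>"
    if "openin (top_of_set J) U" "x \<in> U" for x U
  proof -
    obtain q where "q \<in> J" and q_far: "\<And>i. d \<le> dist x ((g ^^ i) q)"
      using far by blast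
    define V where "V = U \<inter> ball x \<delta>"
    have "openin (top_of_set J) V" "x \<in> V"
      unfolding V_def using that \<open>d > 0\<close> by (auto simp: openin_Int_open \<delta>_def)
    then obtain p n where p: "p \<in> V" "n \<ge> 1" "(g ^^ n) p = p"
      using periodic_points_denseD[OF \<open>periodic_points_dense J g\<close>] by blast
    define W where "W = (\<Inter>i\<in>{..n}. J \<inter> (g ^^ i) -` ball ((g ^^ i) q) \<delta>)"
    have "openin (top_of_set J) W"
      unfolding W_def
      by (intro openin_INT2 continuous_openin_preimage[where T=UNIV] continuous_on_funpow g) auto
    moreover have "q \<in> W"
      unfolding W_def using \<open>q \<in> J\<close> \<open>d > 0\<close> by (simp add: \<delta>_def)
    ultimately obtain k y where k: "k \<ge> 1" "y \<in> V" "(g ^^ k) y \<in> W"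
      using transitive \<open>openin (top_of_set J) V\<close> \<open>x \<in> V\<close> unfolding top_transitive_def by blast
    define N where "N = n * (k div n + 1)"
    have "N = n * (k div n) + n" "n * (k div n) + k mod n = k" "k mod n < n"
      unfolding N_def using p(2) by simp_all
    then have "k < N" "N \<le> k + n"
      by linarith+
    have "(g ^^ N) y = (g ^^ (N - k)) ((g ^^ k) y)"
      using \<open>k < N\<close> funpow_add[of "N - k" k g] by simp
    then have "dist ((g ^^ N) y) ((g ^^ (N - k)) q) < \<delta>"
      using k(3) \<open>N \<le> k + n\<close> unfolding W_def by (auto simp: dist_commute)
    moreover have "(g ^^ N) p = p"
      unfolding N_def using funpow_mult_fixpoint[OF p(3)] .
    then have "dist x ((g ^^ N) p) < \<delta>"
      using p(1) unfolding V_def by simp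
    moreover note q_far[of "N - k"]
    moreover have "dist x ((g ^^ (N - k)) q) \<le> dist x ((g ^^ N) p) + dist ((g ^^ N) p) ((g ^^ N) y)
        + dist ((g ^^ N) y) ((g ^^ (N - k)) q)"
      by (meson dist_triangle add_mono order_trans order_refl)
    ultimately have "2 * \<delta> < dist ((g ^^ N) p) ((g ^^ N) y)"
      unfolding \<delta>_def by linarith
    then have "\<delta> < dist ((g ^^ N) x) ((g ^^ N) p) \<or> \<delta> < dist ((g ^^ N) x) ((g ^^ N) y)"
      using dist_triangle3[of "(g ^^ N) p" "(g ^^ N) y" "(g ^^ N) x"] by linarith
    moreover have "p \<in> U" "y \<in> U" "N \<ge> 1"
      using p(1) k(2) \<open>k < N\<close> unfolding V_def by auto
    ultimately show ?thesis
      by (auto simp: dist_real_def)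
  qed
  moreover have "\<delta> > 0"
    using \<open>d > 0\<close> by (simp add: \<delta>_def)
  ultimately show ?thesis
    unfolding sensitive_def by blast
qed

lemma nacomp_image:
  assumes "\<And>n. n \<ge> 1 \<Longrightarrow> f n ` J = J"
  shows "nacomp f n ` J = J"
proof (induction n)
  case (Suc n)
  have "nacomp f (Suc n) ` J = f (Suc n) ` nacomp f n ` J"
    by (simp add: image_comp)
  then show ?case
    using Suc assms[of "Suc n"] by simp
qed simp

lemma continuous_on_nacomp:
  assumes "\<And>n. n \<ge> 1 \<Longrightarrow> continuous_on J (f n)" "\<And>n. n \<ge> 1 \<Longrightarrow> f n ` J = J"
  shows "continuous_on J (nacomp f n)"
proof (induction n)
  case (Suc n)
  have "continuous_on (nacomp f n ` J) (f (Suc n))"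
    using assms(1)[of "Suc n"] nacomp_image[of f J n, OF assms(2)] by simp
  then show ?case
    using continuous_on_compose[OF Suc] by simp
qed simp

lemma nacomp_add_period:
  assumes "\<And>n. n \<ge> 1 \<Longrightarrow> f (n + m) = f n"
  shows "nacomp f (m + n) = nacomp f n \<circ> nacomp f m"
proof (induction n)
  case (Suc n)
  have "nacomp f (m + Suc n) = f (Suc n + m) \<circ> nacomp f (m + n)"
    by (simp add: add.commute)
  also have "\<dots> = f (Suc n) \<circ> (nacomp f n \<circ> nacomp f m)"
    using assms[of "Suc n"] Suc by (simp add: comp_def)
  finally show ?case
    by (simp add: o_assoc)
qed simp

lemma nacomp_mult_period:
  assumes "\<And>n. n \<ge> 1 \<Longrightarrow> f (n + m) = f n"
  shows "nacomp f (m * k) = nacomp f m ^^ k"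
proof (induction k)
  case (Suc k)
  have "nacomp f (m * Suc k) = nacomp f (m * k) \<circ> nacomp f m"
    using nacomp_add_period[where f = f and m = m, OF assms, of "m * k"] by simp
  then show ?case
    by (simp only: funpow_Suc_right Suc)
qed simp

lemma top_transitive_imp_na_transitive:
  assumes "m \<ge> 1" "\<And>k. nacomp f (m * k) = g ^^ k" "top_transitive J g"
  shows "na_transitive J f"
  unfolding na_transitive_def
proof (intro allI impI)
  fix U V
  assume "openin (top_of_set J) U \<and> U \<noteq> {} \<and> openin (top_of_set J) V \<and> V \<noteq> {}"
  then obtain k where "k \<ge> 1" "(g ^^ k) ` U \<inter> V \<noteq> {}"
    using assms(3) unfolding top_transitive_def by blast
  then show "\<exists>n\<ge>1. nacomp f n ` U \<inter> V \<noteq> {}"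
    using assms(1,2) by (intro exI[of _ "m * k"]) simp
qed

lemma periodic_points_dense_imp_na_dense_periodic:
  assumes "m \<ge> 1" "\<And>k. nacomp f (m * k) = g ^^ k" "periodic_points_dense J g"
  shows "na_dense_periodic J f"
proof -
  have "na_periodic_point f x" if "(g ^^ p) x = x" "p \<ge> 1" for x p
    unfolding na_periodic_point_def
  proof (intro exI[of _ "m * p"] conjI allI impI)
    show "1 \<le> m * p"
      using assms(1) that(2) by simp
    fix k
    show "nacomp f (m * p * k) x = x"
      using assms(2)[of "p * k"] funpow_mult_fixpoint[OF that(1), of k] by (simp add: mult.assoc)
  qed
  then have "{x \<in> J. \<exists>p\<ge>1. (g ^^ p) x = x} \<subseteq> {x \<in> J. na_periodic_point f x}"
    by blast
  then have "closure {x \<in> J. \<exists>p\<ge>1. (g ^^ p) x = x} \<subseteq> closure {x \<in> J. na_periodic_point f x}"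
    by (rule closure_mono)
  with assms(3) show ?thesis
    unfolding periodic_points_dense_def na_dense_periodic_def by (rule order_trans)
qed

lemma sensitive_imp_na_sensitive:
  assumes "m \<ge> 1" "\<And>k. nacomp f (m * k) = g ^^ k" "sensitive J g"
  shows "na_sensitive J f"
proof -
  obtain \<delta> where "\<delta> > 0" and \<delta>: "\<forall>x\<in>J. \<forall>U. openin (top_of_set J) U \<and> x \<in> U \<longrightarrow>
      (\<exists>y\<in>U. \<exists>k\<ge>1. \<delta> < \<bar>(g ^^ k) x - (g ^^ k) y\<bar>)"
    using assms(3) unfolding sensitive_def by blast
  show ?thesis
    unfolding na_sensitive_def
  proof (intro exI[of _ \<delta>] conjI ballI allI impI)
    fix x U
    assume "x \<in> J" "openin (top_of_set J) U \<and> x \<in> U"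
    then obtain y k where "y \<in> U" "k \<ge> 1" "\<delta> < \<bar>(g ^^ k) x - (g ^^ k) y\<bar>"
      using \<delta> by blast
    then have "m * k \<ge> 1" "\<delta> < \<bar>nacomp f (m * k) x - nacomp f (m * k) y\<bar>"
      using assms(1,2) by simp_all
    then show "\<exists>y\<in>U. \<exists>n\<ge>1. \<bar>nacomp f n x - nacomp f n y\<bar> > \<delta>"
      using \<open>y \<in> U\<close> by blast
  qed (rule \<open>\<delta> > 0\<close>)
qed

theorem mainTheorem18:
  fixes J :: "real set" and f :: "nat \<Rightarrow> real \<Rightarrow> real" and m :: nat
  assumes "nondegenerate_interval J"
    and "m \<ge> 1"
    and "\<And>n. n \<ge> 1 \<Longrightarrow> f (n + m) = f n"
    and "\<And>n. n \<ge> 1 \<Longrightarrow> continuous_on J (f n)"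
    and "\<And>n. n \<ge> 1 \<Longrightarrow> f n ` J = J"
    and "top_transitive J (nacomp f m)"
  shows "na_devaney_chaotic J f"
proof -
  define g where "g = nacomp f m"
  have iterate: "nacomp f (m * k) = g ^^ k" for k
    unfolding g_def using nacomp_mult_period[where f = f and m = m, OF assms(3)] .
  have g: "continuous_on J g" "g ` J \<subseteq> J"
    unfolding g_def using continuous_on_nacomp[OF assms(4,5)] nacomp_image[OF assms(5)] by auto
  have transitive: "top_transitive J g"
    unfolding g_def using assms(6) .
  have dense: "periodic_points_dense J g"
    using transitive_interval_map_periodic_dense[OF assms(1) g transitive] .
  have sensitive: "sensitive J g"
    using transitive_periodic_dense_imp_sensitive[OF g transitive
        nondegenerate_interval_infinite[OF assms(1)] dense] .
  show ?thesis
    unfolding na_devaney_chaotic_def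
    using top_transitive_imp_na_transitive[OF assms(2) iterate transitive]
      periodic_points_dense_imp_na_dense_periodic[OF assms(2) iterate dense]
      sensitive_imp_na_sensitive[OF assms(2) iterate sensitive]
    by (intro conjI)
qed

end
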